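(* Assume $A\ge\varepsilon^2/16$. Let $\phi^0\in\mathcal{G}_N$ and define $\phi^{-1}=\phi^0-\Delta t\,\Delta_N\mu^0$ with $\mu^0=-\nabla_N\cdot(|\nabla_N\phi^0|^2\nabla_N\phi^0)+a\phi^0+2\Delta_N\phi^0+\Delta_N^2\phi^0$. Let $(\phi^m)_{m\ge1}$ be generated by the scheme \[ \frac{\frac32\phi^{k+1}-2\phi^k+\frac12\phi^{k-1}}{\Delta t}=\Delta_N\mu_i^{k+1},\quad k\ge0, \] with $i=1$ or $i=2$, where \[ \mu_1^{k+1}=-\nabla_N\cdot(|\nabla_N\phi^{k+1}|^2\nabla_N\phi^{k+1})+a\phi^{k+1}+2\Delta_N(2\phi^k-\phi^{k-1})-A\Delta t\,\Delta_N(\phi^{k+1}-\phi^k)+\Delta_N^2\phi^{k+1}, \] \[ \mu_2^{k+1}=-\nabla_N\cdot(|\nabla_N\phi^{k+1}|^2\nabla_N\phi^{k+1})-\varepsilon(2\phi^k-\phi^{k-1})-A\Delta t\,\Delta_N(\phi^{k+1}-\phi^k)+(1+\Delta_N)^2\phi^{k+1}. \] Suppose that, for some constant $\tilde C_0$ independent of $h$, \[ E_N(\phi^0)+\frac{\Delta t}{4}\|\nabla_N\mu^0\|_2^2+\Delta t^2\|\nabla_N\Delta_N\mu^0\|_2^2\le\tilde C_0 \quad\text{(for } i=1\text{)}, \] \[ E_N(\phi^0)+\frac{\Delta t}{4}\|\nabla_N\mu^0\|_2^2+\frac{\varepsilon\Delta t^2}{2}\|\Delta_N\mu^0\|_2^2\le\tilde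 C_0\quad\text{(for } i=2\text{)}. \] Then $\|\phi^m\|_{H_N^2}\le\tilde C_1$ for all $m\ge1$, where $\tilde C_1>0$ depends on $\Omega$ and $\tilde C_0$ but is independent of $h$, $\Delta t$ and the final time.
   Context: Let $K\in\mathbb{N}$, $N=2K+1$, $h=1/N$, $\Omega=(0,1)^3$, grid points $(ih,jh,kh)$. $\mathcal{G}_N$ is the space of real grid functions on $\mathbb{Z}^3$ that are $N$-periodic in each index; $\langle f,g\rangle=h^3\sum_{i,j,k=0}^{N-1}f_{i,j,k}g_{i,j,k}$, $\|f\|_p=(h^3\sum|f_{i,j,k}|^p)^{1/p}$ (pointwise Euclidean norm for vector-valued grid functions). Each $f\in\mathcal{G}_N$ has discrete Fourier expansion $f_{i,j,k}=\sum_{\ell,m,n=-K}^K\hat f_{\ell,m,n}\exp(2\pi\mathrm{i}(\ell x_i+my_j+nz_k))$; $\mathcal{D}_x$ multiplies coefficients by $2\pi\mathrm{i}\ell$ (similarly $\mathcal{D}_y,\mathcal{D}_z$), $\nabla_Nf=(\mathcal{D}_xf,\mathcal{D}_yf,\mathcal{D}_zf)$, $\nabla_N\cdot(f_1,f_2,f_3)=\mathcal{D}_xf_1+\mathcal{D}_yf_2+\mathcal{D}_zf_3$, $\Delta_N$ multiplies coefficients by $-4\pi^2(\ell^2+m^2+n^2)$; nonlinear products are pointwise. $\|f\|_{H_N^2}^2=\|f\|_2^2+\|\nabla_Nf\|_2^2+\|\Delta_Nf\|_2^2$. The discrete energy is $E_N(\phi)=\frac14\|\nabla_N\phi\|_4^4+\frac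 a2\|\phi\|_2^2-\|\nabla_N\phi\|_2^2+\frac12\|\Delta_N\phi\|_2^2$. Parameters: $\Delta t>0$, $0<\varepsilon<1$, $a=1-\varepsilon>0$, $A$ a constant. *)

theory Defs
  imports Complex_Main
begin

text \<open>Grid functions on Z^3; a grid function belongs to G_N iff it is N-periodic in each index.
  Here N = 2K+1 and h = 1/N.\<close>

type_synonym grid = "int \<times> int \<times> int \<Rightarrow> real"

definition NN :: "nat \<Rightarrow> nat" where "NN K = 2 * K + 1"

definition hh :: "nat \<Rightarrow> real" where "hh K = 1 / real (NN K)"

definition gridfun :: "nat \<Rightarrow> grid \<Rightarrow> bool" where
  "gridfun K f \<longleftrightarrow> (\<forall>i j k. f (i + int (NN K), j, k) = f (i, j, k)
      \<and> f (i, j + int (NN K), k) = f (i, j, k) \<and> f (i, j, k + int (NN K)) = f (i, j, k))"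

definition idx :: "nat \<Rightarrow> int set" where "idx K = {0..<int (NN K)}"

definition modes :: "nat \<Rightarrow> int set" where "modes K = {- int K..int K}"

definition gsum :: "nat \<Rightarrow> grid \<Rightarrow> real" where
  "gsum K f = hh K ^ 3 * (\<Sum>i\<in>idx K. \<Sum>j\<in>idx K. \<Sum>k\<in>idx K. f (i, j, k))"

definition ginner :: "nat \<Rightarrow> grid \<Rightarrow> grid \<Rightarrow> real" where
  "ginner K f g = gsum K (\<lambda>x. f x * g x)"

definition lpnorm :: "nat \<Rightarrow> real \<Rightarrow> grid \<Rightarrow> real" where
  "lpnorm K p f = (gsum K (\<lambda>x. \<bar>f x\<bar> powr p)) powr (1 / p)"

type_synonym vgrid = "grid \<times> grid \<times> grid"

definition vlpnorm :: "nat \<Rightarrow> real \<Rightarrow> vgrid \<Rightarrow> real" where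
  "vlpnorm K p g = (case g of (g1, g2, g3) \<Rightarrow>
      lpnorm K p (\<lambda>x. sqrt ((g1 x)\<^sup>2 + (g2 x)\<^sup>2 + (g3 x)\<^sup>2)))"

text \<open>Discrete Fourier coefficients: f_{ijk} = sum_{l,m,n=-K..K} fhat_{lmn} exp(2 pi i (l x_i + m y_j + n z_k)),
  x_i = i h.\<close>
definition dft :: "nat \<Rightarrow> grid \<Rightarrow> int \<times> int \<times> int \<Rightarrow> complex" where
  "dft K f lmn = (case lmn of (l, m, n) \<Rightarrow>
     (1 / of_nat (NN K ^ 3)) * (\<Sum>i\<in>idx K. \<Sum>j\<in>idx K. \<Sum>k\<in>idx K.
        of_real (f (i, j, k)) * cis (- 2 * pi * (real_of_int (l * i + m * j + n * k)) * hh K)))"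

text \<open>Spectral (Fourier multiplier) operator with symbol sigma; for real f and the symbols used
  below the sum is real, we take its real part.\<close>
definition spec :: "nat \<Rightarrow> (int \<times> int \<times> int \<Rightarrow> complex) \<Rightarrow> grid \<Rightarrow> grid" where
  "spec K \<sigma> f x = (case x of (i, j, k) \<Rightarrow>
     Re (\<Sum>l\<in>modes K. \<Sum>m\<in>modes K. \<Sum>n\<in>modes K.
        \<sigma> (l, m, n) * dft K f (l, m, n) *
        cis (2 * pi * (real_of_int (l * i + m * j + n * k)) * hh K)))"

definition Dx :: "nat \<Rightarrow> grid \<Rightarrow> grid" where
  "Dx K = spec K (\<lambda>(l, m, n). \<i> * complex_of_real (2 * pi * real_of_int l))"
definition Dy :: "nat \<Rightarrow> grid \<Rightarrow> grid" where
  "Dy K = spec K (\<lambda>(l, m, n). \<i> * complex_of_real (2 * pi * real_of_int m))"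
definition Dz :: "nat \<Rightarrow> grid \<Rightarrow> grid" where
  "Dz K = spec K (\<lambda>(l, m, n). \<i> * complex_of_real (2 * pi * real_of_int n))"

definition Lap :: "nat \<Rightarrow> grid \<Rightarrow> grid" where
  "Lap K = spec K (\<lambda>(l, m, n). complex_of_real (- 4 * pi\<^sup>2 * real_of_int (l\<^sup>2 + m\<^sup>2 + n\<^sup>2)))"

definition grad :: "nat \<Rightarrow> grid \<Rightarrow> vgrid" where
  "grad K f = (Dx K f, Dy K f, Dz K f)"

definition dvg :: "nat \<Rightarrow> vgrid \<Rightarrow> grid" where
  "dvg K g = (case g of (g1, g2, g3) \<Rightarrow> (\<lambda>x. Dx K g1 x + Dy K g2 x + Dz K g3 x))"

definition nlterm :: "nat \<Rightarrow> grid \<Rightarrow> grid" where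
  "nlterm K f = (let s = (\<lambda>x. (Dx K f x)\<^sup>2 + (Dy K f x)\<^sup>2 + (Dz K f x)\<^sup>2) in
     dvg K (\<lambda>x. s x * Dx K f x, \<lambda>x. s x * Dy K f x, \<lambda>x. s x * Dz K f x))"

definition H2norm :: "nat \<Rightarrow> grid \<Rightarrow> real" where
  "H2norm K f = sqrt ((lpnorm K 2 f)\<^sup>2 + (vlpnorm K 2 (grad K f))\<^sup>2 + (lpnorm K 2 (Lap K f))\<^sup>2)"

definition energy :: "nat \<Rightarrow> real \<Rightarrow> grid \<Rightarrow> real" where
  "energy K a \<phi> = 1/4 * (vlpnorm K 4 (grad K \<phi>)) ^ 4 + a / 2 * (lpnorm K 2 \<phi>)\<^sup>2
      - (vlpnorm K 2 (grad K \<phi>))\<^sup>2 + 1/2 * (lpnorm K 2 (Lap K \<phi>))\<^sup>2"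

definition mu0 :: "nat \<Rightarrow> real \<Rightarrow> grid \<Rightarrow> grid" where
  "mu0 K a \<phi> = (\<lambda>x. - nlterm K \<phi> x + a * \<phi> x + 2 * Lap K \<phi> x + Lap K (Lap K \<phi>) x)"

text \<open>mu_1^{k+1}, arguments: new = phi^{k+1}, cur = phi^k, old = phi^{k-1}\<close>
definition mu1 :: "nat \<Rightarrow> real \<Rightarrow> real \<Rightarrow> real \<Rightarrow> grid \<Rightarrow> grid \<Rightarrow> grid \<Rightarrow> grid" where
  "mu1 K a A dt new cur old = (\<lambda>x. - nlterm K new x + a * new x
      + 2 * Lap K (\<lambda>y. 2 * cur y - old y) x
      - A * dt * Lap K (\<lambda>y. new y - cur y) x
      + Lap K (Lap K new) x)"

definition IdLap :: "nat \<Rightarrow> grid \<Rightarrow> grid" where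
  "IdLap K f = (\<lambda>x. f x + Lap K f x)"

definition mu2 :: "nat \<Rightarrow> real \<Rightarrow> real \<Rightarrow> real \<Rightarrow> grid \<Rightarrow> grid \<Rightarrow> grid \<Rightarrow> grid" where
  "mu2 K \<epsilon> A dt new cur old = (\<lambda>x. - nlterm K new x
      - \<epsilon> * (2 * cur x - old x)
      - A * dt * Lap K (\<lambda>y. new y - cur y) x
      + IdLap K (IdLap K new) x)"

end

theory Submission
  imports Defs "HOL-Library.Product_Plus"
begin

text \<open>The discrete Fourier transform diagonalises everything: on one period the grid functions
  correspond exactly to the modes \<open>l\<close> with \<open>|l\<^sub>i| \<le> K\<close>, Parseval holds, and \<open>\<Delta>\<^sub>N\<close>, \<open>\<nabla>\<^sub>N\<close> are
  Fourier multipliers. With \<open>L = 4\<pi>\<^sup>2|l|\<^sup>2\<close>, the energy is \<open>1/4 \<parallel>\<nabla>\<^sub>N\<phi>\<parallel>\<^sub>4\<^sup>4\<close> plus the quadratic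
  form with symbol \<open>a/2 - L + L\<^sup>2/2\<close>. Because \<open>L = 0\<close> or \<open>L \<ge> 4\<close>, that symbol dominates
  \<open>a/8 (1 + L + L\<^sup>2)\<close>, so the energy controls the \<open>H\<^sup>2\<close> norm.

  Test the scheme with \<open>\<phi>\<^bsup>k+1\<^esup> - \<phi>\<^bsup>k\<^esup>\<close> in the \<open>H\<^bsup>-1\<^esup>\<close> inner product. The BDF2 difference
  produces the telescoping term \<open>\<parallel>\<phi>\<^bsup>k+1\<^esup> - \<phi>\<^bsup>k\<^esup>\<parallel>\<^bsub>-1\<^esub>\<^sup>2 / (4\<Delta>t)\<close>, and convexity of
  \<open>1/4 |\<nabla>\<phi>|\<^sup>4\<close> handles the nonlinear term. The explicit linear terms telescope mode by mode,
  leaving a stabilising term: \<open>\<parallel>\<nabla>\<^sub>N(\<phi>\<^bsup>k+1\<^esup> - \<phi>\<^bsup>k\<^esup>)\<parallel>\<^sup>2\<close> for \<open>\<mu>\<^sub>1\<close>, and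
  \<open>\<epsilon>/2 \<parallel>\<phi>\<^bsup>k+1\<^esup> - \<phi>\<^bsup>k\<^esup>\<parallel>\<^sup>2\<close> for \<open>\<mu>\<^sub>2\<close>. This step also uses the gap in the spectrum,
  so \<open>A \<ge> 0\<close> suffices. Hence the modified energy does not increase, and the choice of
  \<open>\<phi>\<^bsup>-1\<^esup>\<close> makes its initial value exactly the assumed bound.\<close>

section \<open>Discrete Fourier analysis on the grid\<close>

lemma NN_pos: "0 < NN K"
  by (simp add: NN_def)

lemma sum_cis_window_eq_0:
  fixes c d :: int
  assumes "\<not> int (NN K) dvd d"
  shows "(\<Sum>j\<in>{c..<c + int (NN K)}. cis (2 * pi * real_of_int (d * j) * hh K)) = 0"
proof -
  define N where "N = NN K"
  have N: "0 < N" "hh K = 1 / real N"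
    using NN_pos by (simp_all add: N_def hh_def)
  define w where "w = cis (2 * pi * real_of_int d * hh K)"
  have "w \<noteq> 1"
  proof
    assume "w = 1"
    then obtain k :: int where "2 * pi * real_of_int d * hh K = k * 2 * pi"
      by (auto simp: w_def complex_eq_iff cos_one_2pi_int)
    then have "real_of_int d = real N * k"
      using N by (simp add: field_simps)
    then have "d = int N * k"
      by (metis of_int_eq_iff of_int_mult of_int_of_nat_eq)
    with assms show False
      by (simp add: N_def)
  qed
  have "w ^ N = cis (2 * pi * real_of_int d)"
    using N by (simp add: w_def DeMoivre)
  then have "w ^ N = 1"
    by (simp add: cis_multiple_2pi)
  have "{c..<c + int N} = (\<lambda>n. c + int n) ` {..<N}"
    by (auto intro!: image_eqI[of _ _ "nat (_ - c)"])
  then have "(\<Sum>j\<in>{c..<c + int N}. cis (2 * pi * real_of_int (d * j) * hh K))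
      = (\<Sum>n<N. cis (2 * pi * real_of_int (d * c) * hh K) * w ^ n)"
    by (simp add: sum.reindex inj_on_def w_def DeMoivre cis_mult algebra_simps)
  also have "\<dots> = cis (2 * pi * real_of_int (d * c) * hh K) * ((w ^ N - 1) / (w - 1))"
    by (simp add: sum_distrib_left[symmetric] geometric_sum[OF \<open>w \<noteq> 1\<close>])
  also have "\<dots> = 0"
    by (simp add: \<open>w ^ N = 1\<close>)
  finally show ?thesis
    by (simp add: N_def)
qed

lemma sum_cis_window:
  fixes c d :: int
  assumes "\<bar>d\<bar> < int (NN K)"
  shows "(\<Sum>j\<in>{c..<c + int (NN K)}. cis (2 * pi * real_of_int (d * j) * hh K))
    = (if d = 0 then of_nat (NN K) else 0)"
proof (cases "d = 0")
  case False
  have "\<not> int (NN K) dvd d"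
  proof
    assume "int (NN K) dvd d"
    with False have "int (NN K) \<le> \<bar>d\<bar>"
      by (metis dvd_imp_le_int abs_ge_zero abs_of_nonneg of_nat_0_le_iff)
    with assms show False
      by simp
  qed
  with False show ?thesis
    using sum_cis_window_eq_0[of K d c] by simp
qed simp

definition nodes :: "nat \<Rightarrow> (int \<times> int \<times> int) set" where
  "nodes K = idx K \<times> idx K \<times> idx K"

definition freqs :: "nat \<Rightarrow> (int \<times> int \<times> int) set" where
  "freqs K = modes K \<times> modes K \<times> modes K"

definition dot3 :: "int \<times> int \<times> int \<Rightarrow> int \<times> int \<times> int \<Rightarrow> int" where
  "dot3 l x = fst l * fst x + fst (snd l) * fst (snd x) + snd (snd l) * snd (snd x)"

definition plane_wave :: "nat \<Rightarrow> int \<times> int \<times> int \<Rightarrow> int \<times> int \<times> int \<Rightarrow> complex" where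
  "plane_wave K l x = cis (2 * pi * real_of_int (dot3 l x) * hh K)"

lemma finite_nodes [simp]: "finite (nodes K)"
  by (simp add: nodes_def idx_def)

lemma finite_freqs [simp]: "finite (freqs K)"
  by (simp add: freqs_def modes_def)

lemma zero_in_freqs [simp]: "0 \<in> freqs K"
  by (simp add: freqs_def modes_def zero_prod_def)

lemma uminus_in_freqs: "l \<in> freqs K \<Longrightarrow> - l \<in> freqs K"
  by (auto simp: freqs_def modes_def)

lemma plane_wave_mult_cnj: "plane_wave K a x * cnj (plane_wave K b x) = plane_wave K (a - b) x"
  by (simp add: plane_wave_def dot3_def cis_cnj cis_mult algebra_simps)

lemma plane_wave_mult_cnj_same_freq:
  "plane_wave K l x * cnj (plane_wave K l y) = plane_wave K (x - y) l"
  by (simp add: plane_wave_def dot3_def cis_cnj cis_mult algebra_simps)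

lemma cnj_plane_wave: "cnj (plane_wave K l x) = plane_wave K (- l) x"
  unfolding plane_wave_def dot3_def cis_cnj by (rule arg_cong[where f = cis]) (simp add: algebra_simps)

lemma sum_plane_wave_box:
  assumes S: "S = {c..<c + int (NN K)}"
    and "\<bar>fst d\<bar> < int (NN K)" "\<bar>fst (snd d)\<bar> < int (NN K)" "\<bar>snd (snd d)\<bar> < int (NN K)"
  shows "(\<Sum>x\<in>S \<times> S \<times> S. plane_wave K d x) = (if d = 0 then of_nat (NN K ^ 3) else 0)"
proof -
  define w where "w e j = cis (2 * pi * real_of_int (e * j) * hh K)" for e j :: int
  have "(\<Sum>x\<in>S \<times> S \<times> S. plane_wave K d x)
      = (\<Sum>j1\<in>S. \<Sum>j2\<in>S. \<Sum>j3\<in>S. w (fst d) j1 * w (fst (snd d)) j2 * w (snd (snd d)) j3)"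
    by (simp add: sum.cartesian_product' plane_wave_def dot3_def w_def cis_mult algebra_simps)
  also have "\<dots> = (\<Sum>j1\<in>S. w (fst d) j1 * (\<Sum>j2\<in>S. w (fst (snd d)) j2 * sum (w (snd (snd d))) S))"
    by (simp add: sum_distrib_left mult.assoc)
  also have "\<dots> = sum (w (fst d)) S * sum (w (fst (snd d))) S * sum (w (snd (snd d))) S"
    by (simp add: sum_distrib_right mult.assoc)
  also have "\<dots> = (if d = 0 then of_nat (NN K ^ 3) else 0)"
  proof -
    have "sum (w e) S = (if e = 0 then of_nat (NN K) else 0)" if "\<bar>e\<bar> < int (NN K)" for e
      using sum_cis_window[OF that] unfolding w_def S .
    with assms(2-4) show ?thesis
      by (cases d) (simp add: zero_prod_def power3_eq_cube)
  qed
  finally show ?thesis .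
qed

lemma sum_plane_wave_nodes:
  assumes "a \<in> freqs K" "b \<in> freqs K"
  shows "(\<Sum>x\<in>nodes K. plane_wave K (a - b) x) = (if a = b then of_nat (NN K ^ 3) else 0)"
  using assms unfolding nodes_def
  by (subst sum_plane_wave_box[of _ 0]) (auto simp: idx_def freqs_def modes_def NN_def)

lemma sum_plane_wave_freqs:
  assumes "x \<in> nodes K" "y \<in> nodes K"
  shows "(\<Sum>l\<in>freqs K. plane_wave K (x - y) l) = (if x = y then of_nat (NN K ^ 3) else 0)"
proof -
  define S where "S = {- int K..<- int K + int (NN K)}"
  have "freqs K = S \<times> S \<times> S"
    by (auto simp: S_def freqs_def modes_def NN_def)
  with assms show ?thesis
    by (simp only:, subst sum_plane_wave_box[OF S_def]) (auto simp: nodes_def idx_def mem_Times_iff)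
qed

lemma gsum_nodes: "gsum K f = hh K ^ 3 * (\<Sum>x\<in>nodes K. f x)"
  by (simp add: gsum_def nodes_def sum.cartesian_product')

lemma dft_nodes:
  "dft K f l = (\<Sum>x\<in>nodes K. of_real (f x) * cnj (plane_wave K l x)) / of_nat (NN K ^ 3)"
  by (cases l) (simp add: dft_def nodes_def sum.cartesian_product' plane_wave_def dot3_def cis_cnj)

lemma spec_freqs: "spec K \<sigma> f x = Re (\<Sum>l\<in>freqs K. \<sigma> l * dft K f l * plane_wave K l x)"
  by (cases x) (simp add: spec_def freqs_def sum.cartesian_product' plane_wave_def dot3_def)

lemma hh_cube: "hh K ^ 3 = 1 / real (NN K ^ 3)"
  by (simp add: hh_def power_one_over)

lemma dft_inversion:
  assumes "x \<in> nodes K"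
  shows "(\<Sum>l\<in>freqs K. dft K f l * plane_wave K l x) = of_real (f x)"
proof -
  have "(\<Sum>l\<in>freqs K. dft K f l * plane_wave K l x)
      = (\<Sum>y\<in>nodes K. of_real (f y) * (\<Sum>l\<in>freqs K. plane_wave K (x - y) l)) / of_nat (NN K ^ 3)"
    by (simp add: dft_nodes sum_divide_distrib sum_distrib_left sum_distrib_right
        plane_wave_mult_cnj_same_freq mult.assoc mult.commute[of "cnj _"] flip: sum.swap[of _ "freqs K"])
  also have "\<dots> = of_real (f x)"
    using assms NN_pos[of K] by (simp add: sum_plane_wave_freqs if_distrib sum.delta' cong: if_cong)
  finally show ?thesis .
qed

lemma cnj_dft: "cnj (dft K f l) = (\<Sum>x\<in>nodes K. of_real (f x) * plane_wave K l x) / of_nat (NN K ^ 3)"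
  by (simp add: dft_nodes cnj_sum)

lemma dft_reflect: "dft K f (- l) = cnj (dft K f l)"
  by (simp add: cnj_dft dft_nodes cnj_plane_wave)

lemma sum_freqs_reflect: "(\<Sum>l\<in>freqs K. g (- l)) = (\<Sum>l\<in>freqs K. g l)"
  by (rule sum.reindex_bij_witness[of _ uminus uminus]) (auto simp: uminus_in_freqs)

definition hermitian :: "nat \<Rightarrow> (int \<times> int \<times> int \<Rightarrow> complex) \<Rightarrow> bool" where
  "hermitian K \<sigma> \<longleftrightarrow> (\<forall>l\<in>freqs K. \<sigma> (- l) = cnj (\<sigma> l))"

lemma spec_eq_sum:
  assumes "hermitian K \<sigma>"
  shows "of_real (spec K \<sigma> f x) = (\<Sum>l\<in>freqs K. \<sigma> l * dft K f l * plane_wave K l x)"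
proof -
  let ?T = "\<Sum>l\<in>freqs K. \<sigma> l * dft K f l * plane_wave K l x"
  have "cnj ?T = (\<Sum>l\<in>freqs K. \<sigma> (- l) * dft K f (- l) * plane_wave K (- l) x)"
    using assms by (simp add: hermitian_def dft_reflect cnj_plane_wave cnj_sum)
  also have "\<dots> = ?T"
    by (rule sum_freqs_reflect)
  finally have "?T \<in> \<real>"
    using Reals_cnj_iff by blast
  then show ?thesis
    unfolding spec_freqs by (rule of_real_Re)
qed

lemma dft_spec:
  assumes "hermitian K \<sigma>" "l \<in> freqs K"
  shows "dft K (spec K \<sigma> f) l = \<sigma> l * dft K f l"
proof -
  have "dft K (spec K \<sigma> f) l = (\<Sum>l'\<in>freqs K. \<sigma> l' * dft K f l'
      * (\<Sum>x\<in>nodes K. plane_wave K (l' - l) x)) / of_nat (NN K ^ 3)"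
    by (simp add: dft_nodes spec_eq_sum[OF assms(1)] sum_distrib_left sum_distrib_right
        plane_wave_mult_cnj mult.assoc flip: sum.swap[of _ "freqs K"])
  also have "\<dots> = \<sigma> l * dft K f l"
    using assms(2) NN_pos[of K] by (simp add: sum_plane_wave_nodes if_distrib sum.delta cong: if_cong)
  finally show ?thesis .
qed

lemma parseval: "of_real (ginner K f g) = (\<Sum>l\<in>freqs K. dft K f l * cnj (dft K g l))"
proof -
  have "(\<Sum>l\<in>freqs K. dft K f l * cnj (dft K g l))
      = (\<Sum>x\<in>nodes K. of_real (g x) * (\<Sum>l\<in>freqs K. dft K f l * plane_wave K l x)) / of_nat (NN K ^ 3)"
    by (simp add: cnj_dft sum_divide_distrib sum_distrib_left sum_distrib_right mult_ac
        flip: sum.swap[of _ "freqs K"])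
  also have "\<dots> = of_real (ginner K f g)"
    by (simp add: dft_inversion ginner_def gsum_nodes hh_cube mult.commute sum_divide_distrib)
  finally show ?thesis ..
qed

lemma dft_add: "dft K (\<lambda>x. f x + g x) l = dft K f l + dft K g l"
  by (simp add: dft_nodes sum.distrib ring_distribs add_divide_distrib)

lemma dft_diff: "dft K (\<lambda>x. f x - g x) l = dft K f l - dft K g l"
  by (simp add: dft_nodes sum_subtractf ring_distribs diff_divide_distrib)

lemma dft_uminus: "dft K (\<lambda>x. - f x) l = - dft K f l"
  by (simp add: dft_nodes sum_negf)

lemma dft_cmult: "dft K (\<lambda>x. c * f x) l = of_real c * dft K f l"
  by (simp add: dft_nodes sum_distrib_left mult_ac)

lemma dft_divide: "dft K (\<lambda>x. f x / c) l = dft K f l / of_real c"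
  by (simp add: dft_nodes sum_divide_distrib ac_simps)

lemma spec_diff: "spec K \<sigma> (\<lambda>x. f x - g x) x = spec K \<sigma> f x - spec K \<sigma> g x"
  by (simp add: spec_freqs dft_diff ring_distribs sum_subtractf)

section \<open>The operators and norms as Fourier multipliers\<close>

definition lap_eig :: "int \<times> int \<times> int \<Rightarrow> real" where
  "lap_eig l = 4 * pi\<^sup>2 * real_of_int ((fst l)\<^sup>2 + (fst (snd l))\<^sup>2 + (snd (snd l))\<^sup>2)"

lemma lap_eig_nonneg: "0 \<le> lap_eig l"
  by (simp add: lap_eig_def)

lemma lap_eig_eq_0_iff: "lap_eig l = 0 \<longleftrightarrow> l = 0"
proof -
  have "lap_eig l = 0 \<longleftrightarrow> (fst l)\<^sup>2 + (fst (snd l))\<^sup>2 + (snd (snd l))\<^sup>2 = 0"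
    unfolding lap_eig_def mult_eq_0_iff of_int_eq_0_iff by simp
  also have "\<dots> \<longleftrightarrow> l = 0"
    by (cases l) (auto simp: zero_prod_def add_nonneg_eq_0_iff)
  finally show ?thesis .
qed

lemma lap_eig_gap: "lap_eig l = 0 \<or> 4 \<le> lap_eig l"
proof -
  define s where "s = (fst l)\<^sup>2 + (fst (snd l))\<^sup>2 + (snd (snd l))\<^sup>2"
  have "0 \<le> s"
    by (simp add: s_def)
  then have "s = 0 \<or> 1 \<le> s"
    by linarith
  moreover have "1 \<le> pi\<^sup>2"
    using pi_ge_two by (simp add: one_le_power)
  ultimately have "s = 0 \<or> 1 * 1 \<le> pi\<^sup>2 * real_of_int s"
    using mult_mono[of 1 "pi\<^sup>2" 1 "real_of_int s"] by auto
  then show ?thesis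
    by (auto simp: lap_eig_def s_def[symmetric])
qed

lemma hermitian_lap_symbol: "hermitian K (\<lambda>l. - of_real (lap_eig l))"
  by (simp add: hermitian_def lap_eig_def)

lemma Lap_eq_spec: "Lap K = spec K (\<lambda>l. - of_real (lap_eig l))"
  unfolding Lap_def lap_eig_def by (rule arg_cong[where f = "spec K"]) (auto simp: fun_eq_iff)

lemma dft_Lap: "l \<in> freqs K \<Longrightarrow> dft K (Lap K g) l = - of_real (lap_eig l) * dft K g l"
  unfolding Lap_eq_spec by (rule dft_spec[OF hermitian_lap_symbol])

lemma dft_IdLap: "l \<in> freqs K \<Longrightarrow> dft K (IdLap K f) l = of_real (1 - lap_eig l) * dft K f l"
  unfolding IdLap_def by (simp only: dft_add dft_Lap) (simp add: algebra_simps)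

definition deriv_symbol :: "(int \<times> int \<times> int \<Rightarrow> int) \<Rightarrow> int \<times> int \<times> int \<Rightarrow> complex" where
  "deriv_symbol c l = \<i> * of_real (2 * pi * real_of_int (c l))"

lemma Dx_eq_spec: "Dx K = spec K (deriv_symbol fst)"
  unfolding Dx_def deriv_symbol_def by (rule arg_cong[where f = "spec K"]) (auto simp: fun_eq_iff)

lemma Dy_eq_spec: "Dy K = spec K (deriv_symbol (\<lambda>l. fst (snd l)))"
  unfolding Dy_def deriv_symbol_def by (rule arg_cong[where f = "spec K"]) (auto simp: fun_eq_iff)

lemma Dz_eq_spec: "Dz K = spec K (deriv_symbol (\<lambda>l. snd (snd l)))"
  unfolding Dz_def deriv_symbol_def by (rule arg_cong[where f = "spec K"]) (auto simp: fun_eq_iff)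

lemma hermitian_deriv_symbol: "(\<And>l. c (- l) = - c l) \<Longrightarrow> hermitian K (deriv_symbol c)"
  by (simp add: hermitian_def deriv_symbol_def)

lemma ginner_spec_skew:
  assumes "hermitian K \<sigma>" "\<forall>l\<in>freqs K. cnj (\<sigma> l) = - \<sigma> l"
  shows "ginner K (spec K \<sigma> g) f = - ginner K g (spec K \<sigma> f)"
proof -
  have "of_real (ginner K (spec K \<sigma> g) f) = (\<Sum>l\<in>freqs K. \<sigma> l * dft K g l * cnj (dft K f l))"
    unfolding parseval by (intro sum.cong refl) (simp add: dft_spec[OF assms(1)])
  also have "\<dots> = - (\<Sum>l\<in>freqs K. dft K g l * cnj (\<sigma> l * dft K f l))"
    unfolding sum_negf[symmetric] by (intro sum.cong refl) (use assms(2) in simp)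
  also have "\<dots> = - of_real (ginner K g (spec K \<sigma> f))"
    unfolding parseval by (simp add: dft_spec[OF assms(1)])
  finally show ?thesis
    by (metis of_real_eq_iff of_real_minus)
qed

lemma ginner_deriv_skew:
  assumes "\<And>l. c (- l) = - c l"
  shows "ginner K (spec K (deriv_symbol c) g) f = - ginner K g (spec K (deriv_symbol c) f)"
proof (rule ginner_spec_skew)
  show "hermitian K (deriv_symbol c)"
    using assms by (rule hermitian_deriv_symbol)
qed (simp add: deriv_symbol_def)

lemma ginner_Dx_skew: "ginner K (Dx K g) f = - ginner K g (Dx K f)"
  unfolding Dx_eq_spec by (rule ginner_deriv_skew) simp

lemma ginner_Dy_skew: "ginner K (Dy K g) f = - ginner K g (Dy K f)"
  unfolding Dy_eq_spec by (rule ginner_deriv_skew) simp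

lemma ginner_Dz_skew: "ginner K (Dz K g) f = - ginner K g (Dz K f)"
  unfolding Dz_eq_spec by (rule ginner_deriv_skew) simp

lemma gsum_mono: "(\<And>x. f x \<le> g x) \<Longrightarrow> gsum K f \<le> gsum K g"
  unfolding gsum_def by (intro mult_left_mono sum_mono) (auto simp: hh_def)

lemma gsum_nonneg: "(\<And>x. 0 \<le> f x) \<Longrightarrow> 0 \<le> gsum K f"
  using gsum_mono[of "\<lambda>_. 0" f K] by (simp add: gsum_def)

lemma gsum_add: "gsum K (\<lambda>x. f x + g x) = gsum K f + gsum K g"
  by (simp add: gsum_nodes sum.distrib ring_distribs)

lemma gsum_diff: "gsum K (\<lambda>x. f x - g x) = gsum K f - gsum K g"
  by (simp add: gsum_nodes sum_subtractf ring_distribs)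

lemma gsum_divide: "gsum K (\<lambda>x. f x / c) = gsum K f / c"
  by (simp add: gsum_nodes sum_divide_distrib[symmetric])

lemma ginner_add_left: "ginner K (\<lambda>x. f x + g x) h = ginner K f h + ginner K g h"
  by (simp add: ginner_def gsum_add ring_distribs)

definition fourier_norm2 :: "nat \<Rightarrow> (int \<times> int \<times> int \<Rightarrow> real) \<Rightarrow> grid \<Rightarrow> real" where
  "fourier_norm2 K w f = (\<Sum>l\<in>freqs K. w l * (cmod (dft K f l))\<^sup>2)"

lemma fourier_norm2_add: "fourier_norm2 K (\<lambda>l. w l + v l) f = fourier_norm2 K w f + fourier_norm2 K v f"
  by (simp add: fourier_norm2_def sum.distrib ring_distribs)

lemma fourier_norm2_diff: "fourier_norm2 K (\<lambda>l. w l - v l) f = fourier_norm2 K w f - fourier_norm2 K v f"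
  by (simp add: fourier_norm2_def sum_subtractf ring_distribs)

lemma fourier_norm2_cmult: "fourier_norm2 K (\<lambda>l. c * w l) f = c * fourier_norm2 K w f"
  by (simp add: fourier_norm2_def sum_distrib_left mult.assoc)

lemma fourier_norm2_const: "fourier_norm2 K (\<lambda>_. c) f = c * fourier_norm2 K (\<lambda>_. 1) f"
  by (simp add: fourier_norm2_def sum_distrib_left)

lemma fourier_norm2_scale: "fourier_norm2 K w (\<lambda>x. c * f x) = c\<^sup>2 * fourier_norm2 K w f"
  by (simp add: fourier_norm2_def dft_cmult norm_mult power_mult_distrib sum_distrib_left mult_ac)

lemma fourier_norm2_nonneg: "(\<And>l. 0 \<le> w l) \<Longrightarrow> 0 \<le> fourier_norm2 K w f"
  unfolding fourier_norm2_def by (intro sum_nonneg) simp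

lemma fourier_norm2_mono: "(\<And>l. w l \<le> v l) \<Longrightarrow> fourier_norm2 K w f \<le> fourier_norm2 K v f"
  unfolding fourier_norm2_def by (intro sum_mono mult_right_mono) auto

lemma fourier_norm2_spec:
  "hermitian K \<sigma> \<Longrightarrow> fourier_norm2 K w (spec K \<sigma> g) = fourier_norm2 K (\<lambda>l. w l * (cmod (\<sigma> l))\<^sup>2) g"
  unfolding fourier_norm2_def by (intro sum.cong refl) (simp add: dft_spec norm_mult power_mult_distrib)

lemma fourier_norm2_Lap: "fourier_norm2 K w (Lap K g) = fourier_norm2 K (\<lambda>l. w l * (lap_eig l)\<^sup>2) g"
  unfolding Lap_eq_spec by (simp add: fourier_norm2_spec[OF hermitian_lap_symbol])

lemma fourier_norm2_deriv:
  "(\<And>l. c (- l) = - c l) \<Longrightarrow> fourier_norm2 K (\<lambda>_. 1) (spec K (deriv_symbol c) g)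
    = fourier_norm2 K (\<lambda>l. (2 * pi * real_of_int (c l))\<^sup>2) g"
  by (simp add: fourier_norm2_spec hermitian_deriv_symbol deriv_symbol_def norm_mult power_mult_distrib)

lemma ginner_self_fourier: "ginner K f f = fourier_norm2 K (\<lambda>_. 1) f"
proof -
  have "complex_of_real (ginner K f f) = of_real (fourier_norm2 K (\<lambda>_. 1) f)"
    unfolding parseval fourier_norm2_def mult_1 of_real_sum complex_norm_square ..
  then show ?thesis
    using of_real_eq_iff by blast
qed

lemma lpnorm2_sq: "(lpnorm K 2 f)\<^sup>2 = ginner K f f"
proof -
  have "(\<lambda>x. \<bar>f x\<bar> powr 2) = (\<lambda>x. f x * f x)"
    by (auto simp: power2_eq_square)
  moreover have "0 \<le> ginner K f f"
    unfolding ginner_def by (rule gsum_nonneg) simp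
  ultimately show ?thesis
    by (simp add: lpnorm_def ginner_def powr_half_sqrt)
qed

lemma L2_sq_fourier: "(lpnorm K 2 f)\<^sup>2 = fourier_norm2 K (\<lambda>_. 1) f"
  by (simp add: lpnorm2_sq ginner_self_fourier)

lemma vlpnorm2_sq: "(vlpnorm K 2 (a, b, c))\<^sup>2 = ginner K a a + ginner K b b + ginner K c c"
proof -
  have "(vlpnorm K 2 (a, b, c))\<^sup>2 = gsum K (\<lambda>x. a x * a x + b x * b x + c x * c x)"
    unfolding vlpnorm_def prod.case lpnorm2_sq ginner_def by (simp add: power2_eq_square)
  then show ?thesis
    by (simp add: gsum_add ginner_def)
qed

lemma grad_sq_fourier: "(vlpnorm K 2 (grad K f))\<^sup>2 = fourier_norm2 K lap_eig f"
proof -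
  have "(vlpnorm K 2 (grad K f))\<^sup>2
      = fourier_norm2 K (\<lambda>l. (2 * pi * real_of_int (fst l))\<^sup>2) f
      + fourier_norm2 K (\<lambda>l. (2 * pi * real_of_int (fst (snd l)))\<^sup>2) f
      + fourier_norm2 K (\<lambda>l. (2 * pi * real_of_int (snd (snd l)))\<^sup>2) f"
    by (simp add: grad_def vlpnorm2_sq ginner_self_fourier Dx_eq_spec Dy_eq_spec Dz_eq_spec
        fourier_norm2_deriv)
  also have "\<dots> = fourier_norm2 K lap_eig f"
    unfolding fourier_norm2_add[symmetric] lap_eig_def
    by (simp add: power_mult_distrib algebra_simps)
  finally show ?thesis .
qed

definition grad_quartic :: "nat \<Rightarrow> grid \<Rightarrow> real" where
  "grad_quartic K f = gsum K (\<lambda>x. ((Dx K f x)\<^sup>2 + (Dy K f x)\<^sup>2 + (Dz K f x)\<^sup>2)\<^sup>2)"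

lemma grad_quartic_nonneg: "0 \<le> grad_quartic K f"
  unfolding grad_quartic_def by (rule gsum_nonneg) simp

lemma vlpnorm4_grad: "(vlpnorm K 4 (grad K f)) ^ 4 = grad_quartic K f"
proof -
  have "\<bar>sqrt s\<bar> powr 4 = s\<^sup>2" if "0 \<le> s" for s :: real
  proof -
    have "\<bar>sqrt s\<bar> powr 4 = ((sqrt s)\<^sup>2)\<^sup>2"
      by (simp add: powr_numeral flip: power_mult)
    with that show ?thesis
      by simp
  qed
  then have "vlpnorm K 4 (grad K f) = grad_quartic K f powr (1 / 4)"
    by (simp add: vlpnorm_def grad_def lpnorm_def grad_quartic_def)
  moreover have "(x powr (1 / 4)) ^ 4 = x" if "0 \<le> x" for x :: real
    using that by (cases "x = 0") (simp_all add: powr_realpow[symmetric] powr_powr)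
  ultimately show ?thesis
    by (simp add: grad_quartic_nonneg)
qed

lemma energy_fourier:
  "energy K a f = grad_quartic K f / 4 + fourier_norm2 K (\<lambda>l. a / 2 - lap_eig l + (lap_eig l)\<^sup>2 / 2) f"
  by (simp add: energy_def vlpnorm4_grad L2_sq_fourier grad_sq_fourier fourier_norm2_Lap
      fourier_norm2_add fourier_norm2_diff fourier_norm2_cmult[symmetric] algebra_simps)

lemma H2norm_sq_fourier: "(H2norm K f)\<^sup>2 = fourier_norm2 K (\<lambda>l. 1 + lap_eig l + (lap_eig l)\<^sup>2) f"
  by (simp add: H2norm_def L2_sq_fourier grad_sq_fourier fourier_norm2_Lap fourier_norm2_add
      fourier_norm2_nonneg lap_eig_nonneg)

section \<open>The nonlinear term\<close>

lemma quartic_convexity: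
  fixes u1 u2 u3 v1 v2 v3 :: real
  shows "((u1\<^sup>2 + u2\<^sup>2 + u3\<^sup>2)\<^sup>2 - (v1\<^sup>2 + v2\<^sup>2 + v3\<^sup>2)\<^sup>2) / 4
    \<le> (u1\<^sup>2 + u2\<^sup>2 + u3\<^sup>2) * (u1 * (u1 - v1) + u2 * (u2 - v2) + u3 * (u3 - v3))"
proof -
  define S where "S = u1\<^sup>2 + u2\<^sup>2 + u3\<^sup>2"
  define T where "T = v1\<^sup>2 + v2\<^sup>2 + v3\<^sup>2"
  define d where "d = u1 * v1 + u2 * v2 + u3 * v3"
  have "0 \<le> (u1 - v1)\<^sup>2 + (u2 - v2)\<^sup>2 + (u3 - v3)\<^sup>2"
    by simp
  then have "2 * d \<le> S + T"
    by (simp add: S_def T_def d_def power2_diff)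
  then have "S * ((S - T) / 2) \<le> S * (S - d)"
    by (intro mult_left_mono) (auto simp: S_def)
  moreover have "(S\<^sup>2 - T\<^sup>2) / 4 \<le> S * ((S - T) / 2)"
    using zero_le_power2[of "S - T"] by (simp add: power2_eq_square field_simps)
  moreover have "u1 * (u1 - v1) + u2 * (u2 - v2) + u3 * (u3 - v3) = S - d"
    by (simp add: S_def d_def power2_eq_square algebra_simps)
  ultimately have "(S\<^sup>2 - T\<^sup>2) / 4 \<le> S * (S - d)"
    by linarith
  with \<open>u1 * (u1 - v1) + u2 * (u2 - v2) + u3 * (u3 - v3) = S - d\<close> show ?thesis
    by (simp only: S_def T_def)
qed

lemma ginner_nlterm_le:
  "ginner K (nlterm K p) (\<lambda>x. p x - c x) \<le> (grad_quartic K c - grad_quartic K p) / 4"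
proof -
  define s where "s x = (Dx K p x)\<^sup>2 + (Dy K p x)\<^sup>2 + (Dz K p x)\<^sup>2" for x
  define d where "d = (\<lambda>x. p x - c x)"
  have "ginner K (nlterm K p) d = - (ginner K (\<lambda>x. s x * Dx K p x) (Dx K d)
      + ginner K (\<lambda>x. s x * Dy K p x) (Dy K d) + ginner K (\<lambda>x. s x * Dz K p x) (Dz K d))"
    unfolding nlterm_def dvg_def Let_def s_def[symmetric] prod.case ginner_add_left
      ginner_Dx_skew ginner_Dy_skew ginner_Dz_skew by simp
  also have "\<dots> = - gsum K (\<lambda>x. s x * (Dx K p x * Dx K d x + Dy K p x * Dy K d x + Dz K p x * Dz K d x))"
    unfolding ginner_def gsum_add[symmetric] by (simp add: ring_distribs mult.assoc)
  also have "\<dots> \<le> - gsum K (\<lambda>x. ((s x)\<^sup>2 - ((Dx K c x)\<^sup>2 + (Dy K c x)\<^sup>2 + (Dz K c x)\<^sup>2)\<^sup>2) / 4)"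
  proof -
    have "Dx K d x = Dx K p x - Dx K c x" "Dy K d x = Dy K p x - Dy K c x"
      "Dz K d x = Dz K p x - Dz K c x" for x
      unfolding d_def Dx_eq_spec Dy_eq_spec Dz_eq_spec spec_diff by simp_all
    then show ?thesis
      unfolding neg_le_iff_le s_def by (intro gsum_mono) (simp only: quartic_convexity)
  qed
  also have "\<dots> = (grad_quartic K c - grad_quartic K p) / 4"
    unfolding grad_quartic_def s_def gsum_divide gsum_diff by (simp only: minus_divide_left minus_diff_eq)
  finally show ?thesis
    by (simp add: d_def)
qed

section \<open>Mode-wise estimates\<close>

lemma bdf2_mode_bound:
  fixes D1 D0 U :: complex and L dt :: real
  assumes dt: "0 < dt" and L: "0 \<le> L"
    and scheme: "(3/2 * D1 - 1/2 * D0) / of_real dt = - of_real L * U"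
    and mean: "L = 0 \<Longrightarrow> D0 = 0"
  shows "L = 0 \<Longrightarrow> D1 = 0"
    and "Re (U * cnj D1) \<le> - (5/4 * (1 / L * (cmod D1)\<^sup>2) - 1/4 * (1 / L * (cmod D0)\<^sup>2)) / dt"
proof -
  show D1: "D1 = 0" if "L = 0"
    using scheme dt mean[OF that] that by simp
  show "Re (U * cnj D1) \<le> - (5/4 * (1 / L * (cmod D1)\<^sup>2) - 1/4 * (1 / L * (cmod D0)\<^sup>2)) / dt"
  proof (cases "L = 0")
    case False
    with L have "0 < L"
      by simp
    obtain a b where D1: "D1 = Complex a b"
      by (cases D1)
    obtain c d where D0: "D0 = Complex c d"
      by (cases D0)
    define P Q R where "P = a * a + b * b" and "Q = c * c + d * d" and "R = a * c + b * d"
    have "2 * R \<le> P + Q"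
      using zero_le_power2[of "a - c"] zero_le_power2[of "b - d"]
      unfolding P_def Q_def R_def by (simp add: power2_eq_square algebra_simps)
    have "U = - (3/2 * D1 - 1/2 * D0) / of_real (dt * L)"
      using scheme \<open>0 < L\<close> dt by (simp add: field_simps)
    then have "Re (U * cnj D1) = - (3/2 * P - 1/2 * R) / (dt * L)"
      by (simp add: D1 D0 P_def R_def Re_divide_of_real algebra_simps)
    also have "\<dots> \<le> - (5/4 * P - 1/4 * Q) / (dt * L)"
      using \<open>2 * R \<le> P + Q\<close> dt \<open>0 < L\<close> by (intro divide_right_mono) simp_all
    also have "\<dots> = - (5/4 * (1 / L * (cmod D1)\<^sup>2) - 1/4 * (1 / L * (cmod D0)\<^sup>2)) / dt"
      using \<open>0 < L\<close> dt unfolding D1 D0 cmod_power2 by (simp add: P_def Q_def power2_eq_square field_simps)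
    finally show ?thesis .
  qed (simp add: D1)
qed

text \<open>In the next two bounds the two sides differ by multiples of \<open>|X - Y|\<^sup>2\<close> and \<open>|X - 2Y + Z|\<^sup>2\<close>.
  The first weight is nonnegative only because \<open>L\<close> avoids the interval \<open>(0, 4)\<close>.\<close>

lemma mu1_mode_bound:
  fixes X Y Z :: complex and L a B :: real
  assumes L: "L = 0 \<or> 4 \<le> L" and "0 \<le> B" "0 \<le> a"
  shows "(a/2 - L + L\<^sup>2/2) * ((cmod X)\<^sup>2 - (cmod Y)\<^sup>2) + L * ((cmod (X - Y))\<^sup>2 - (cmod (Y - Z))\<^sup>2)
    \<le> Re ((of_real a * X - of_real (2 * L) * (2 * Y - Z) + of_real (B * L) * (X - Y)
        + of_real (L\<^sup>2) * X) * cnj (X - Y))"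
proof -
  obtain x1 x2 where X: "X = Complex x1 x2"
    by (cases X)
  obtain y1 y2 where Y: "Y = Complex y1 y2"
    by (cases Y)
  obtain z1 z2 where Z: "Z = Complex z1 z2"
    by (cases Z)
  have "0 \<le> L"
    using L by auto
  have "2 * L \<le> a + L\<^sup>2"
  proof (cases "L = 0")
    case False
    with L have "4 \<le> L"
      by simp
    then have "4 * L \<le> L * L"
      by (intro mult_right_mono) auto
    with \<open>4 \<le> L\<close> \<open>0 \<le> a\<close> show ?thesis
      unfolding power2_eq_square by linarith
  qed (use \<open>0 \<le> a\<close> in simp)
  have "Re ((of_real a * X - of_real (2 * L) * (2 * Y - Z) + of_real (B * L) * (X - Y)
        + of_real (L\<^sup>2) * X) * cnj (X - Y))
      - ((a/2 - L + L\<^sup>2/2) * ((cmod X)\<^sup>2 - (cmod Y)\<^sup>2) + L * ((cmod (X - Y))\<^sup>2 - (cmod (Y - Z))\<^sup>2))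
    = ((a + L\<^sup>2) / 2 - L + B * L) * ((x1 - y1)\<^sup>2 + (x2 - y2)\<^sup>2)
      + L * ((x1 - 2 * y1 + z1)\<^sup>2 + (x2 - 2 * y2 + z2)\<^sup>2)"
    unfolding X Y Z cmod_power2 by (simp add: power2_eq_square field_simps)
  moreover have "0 \<le> ((a + L\<^sup>2) / 2 - L + B * L) * ((x1 - y1)\<^sup>2 + (x2 - y2)\<^sup>2)
      + L * ((x1 - 2 * y1 + z1)\<^sup>2 + (x2 - 2 * y2 + z2)\<^sup>2)"
    using \<open>0 \<le> L\<close> \<open>2 * L \<le> a + L\<^sup>2\<close> \<open>0 \<le> B\<close> by (intro add_nonneg_nonneg mult_nonneg_nonneg) auto
  ultimately show ?thesis
    by linarith
qed

lemma mu2_mode_bound: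
  fixes X Y Z :: complex and L e B :: real
  assumes L: "L = 0 \<or> 4 \<le> L" and "0 \<le> B" "0 \<le> e" "e < 1"
  shows "((1 - e)/2 - L + L\<^sup>2/2) * ((cmod X)\<^sup>2 - (cmod Y)\<^sup>2) + e/2 * ((cmod (X - Y))\<^sup>2 - (cmod (Y - Z))\<^sup>2)
    \<le> Re ((- of_real e * (2 * Y - Z) + of_real (B * L) * (X - Y) + of_real ((1 - L)\<^sup>2) * X)
        * cnj (X - Y))"
proof -
  obtain x1 x2 where X: "X = Complex x1 x2"
    by (cases X)
  obtain y1 y2 where Y: "Y = Complex y1 y2"
    by (cases Y)
  obtain z1 z2 where Z: "Z = Complex z1 z2"
    by (cases Z)
  have "0 \<le> L"
    using L by auto
  have "1 \<le> (1 - L)\<^sup>2"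
    using L one_le_power[of "L - 1" 2] by (auto simp: power2_commute[of 1])
  have "Re ((- of_real e * (2 * Y - Z) + of_real (B * L) * (X - Y) + of_real ((1 - L)\<^sup>2) * X)
        * cnj (X - Y))
      - (((1 - e)/2 - L + L\<^sup>2/2) * ((cmod X)\<^sup>2 - (cmod Y)\<^sup>2) + e/2 * ((cmod (X - Y))\<^sup>2 - (cmod (Y - Z))\<^sup>2))
    = (((1 - L)\<^sup>2 - e) / 2 + B * L) * ((x1 - y1)\<^sup>2 + (x2 - y2)\<^sup>2)
      + e / 2 * ((x1 - 2 * y1 + z1)\<^sup>2 + (x2 - 2 * y2 + z2)\<^sup>2)"
    unfolding X Y Z cmod_power2 by (simp add: power2_eq_square field_simps)
  moreover have "0 \<le> (((1 - L)\<^sup>2 - e) / 2 + B * L) * ((x1 - y1)\<^sup>2 + (x2 - y2)\<^sup>2)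
      + e / 2 * ((x1 - 2 * y1 + z1)\<^sup>2 + (x2 - 2 * y2 + z2)\<^sup>2)"
    using \<open>1 \<le> (1 - L)\<^sup>2\<close> \<open>0 \<le> L\<close> assms(2-4) by (intro add_nonneg_nonneg mult_nonneg_nonneg) auto
  ultimately show ?thesis
    by linarith
qed

section \<open>Testing the scheme\<close>

text \<open>Since \<open>1 / 0 = 0\<close>, the mean mode is dropped. This is harmless: every time difference of the
  scheme has zero mean.\<close>

definition hminus_norm2 :: "nat \<Rightarrow> grid \<Rightarrow> real" where
  "hminus_norm2 K f = fourier_norm2 K (\<lambda>l. 1 / lap_eig l) f"

lemma hminus_norm2_nonneg: "0 \<le> hminus_norm2 K f"
  unfolding hminus_norm2_def by (rule fourier_norm2_nonneg) (simp add: lap_eig_nonneg)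

lemma dft_bdf2_scheme:
  assumes "\<forall>x. (3/2 * p x - 2 * c x + 1/2 * q x) / dt = Lap K \<mu> x" "l \<in> freqs K"
  shows "(3/2 * dft K (\<lambda>x. p x - c x) l - 1/2 * dft K (\<lambda>x. c x - q x) l) / of_real dt
    = - of_real (lap_eig l) * dft K \<mu> l"
proof -
  have "(\<lambda>x. (3/2 * p x - 2 * c x + 1/2 * q x) / dt) = Lap K \<mu>"
    using assms(1) by auto
  then have "dft K (\<lambda>x. (3/2 * p x - 2 * c x + 1/2 * q x) / dt) l = dft K (Lap K \<mu>) l"
    by simp
  then show ?thesis
    by (simp only: dft_divide dft_add dft_diff dft_cmult dft_Lap[OF assms(2)]) (simp add: algebra_simps)
qed

lemma bdf2_test_bound:
  assumes dt: "0 < dt"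
    and scheme: "\<forall>x. (3/2 * p x - 2 * c x + 1/2 * q x) / dt = Lap K \<mu> x"
    and mean: "dft K (\<lambda>x. c x - q x) 0 = 0"
  shows "dft K (\<lambda>x. p x - c x) 0 = 0"
    and "ginner K \<mu> (\<lambda>x. p x - c x) \<le> - (5/4 * hminus_norm2 K (\<lambda>x. p x - c x)
          - 1/4 * hminus_norm2 K (\<lambda>x. c x - q x)) / dt"
proof -
  have mean': "lap_eig l = 0 \<Longrightarrow> dft K (\<lambda>x. c x - q x) l = 0" for l
    using mean by (simp add: lap_eig_eq_0_iff)
  note mode = bdf2_mode_bound[OF dt lap_eig_nonneg dft_bdf2_scheme[OF scheme] mean']
  show "dft K (\<lambda>x. p x - c x) 0 = 0"
    using mode(1)[OF zero_in_freqs] by (simp add: lap_eig_eq_0_iff)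
  have "ginner K \<mu> (\<lambda>x. p x - c x) = (\<Sum>l\<in>freqs K. Re (dft K \<mu> l * cnj (dft K (\<lambda>x. p x - c x) l)))"
    by (metis Re_complex_of_real Re_sum parseval)
  also have "\<dots> \<le> (\<Sum>l\<in>freqs K. - (5/4 * (1 / lap_eig l * (cmod (dft K (\<lambda>x. p x - c x) l))\<^sup>2)
      - 1/4 * (1 / lap_eig l * (cmod (dft K (\<lambda>x. c x - q x) l))\<^sup>2)) / dt)"
    by (intro sum_mono mode(2))
  also have "\<dots> = - (5/4 * hminus_norm2 K (\<lambda>x. p x - c x) - 1/4 * hminus_norm2 K (\<lambda>x. c x - q x)) / dt"
    unfolding hminus_norm2_def fourier_norm2_def
    by (simp only: sum_divide_distrib[symmetric] sum_negf sum_subtractf sum_distrib_left[symmetric])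
  finally show "ginner K \<mu> (\<lambda>x. p x - c x) \<le> - (5/4 * hminus_norm2 K (\<lambda>x. p x - c x)
      - 1/4 * hminus_norm2 K (\<lambda>x. c x - q x)) / dt" .
qed

lemma ginner_test_lower:
  assumes mu: "\<And>x. \<mu> x = - nlterm K p x + \<nu> x"
    and modes: "\<And>l. l \<in> freqs K \<Longrightarrow> v l * ((cmod (dft K p l))\<^sup>2 - (cmod (dft K c l))\<^sup>2)
        + w l * ((cmod (dft K (\<lambda>x. p x - c x) l))\<^sup>2 - (cmod (dft K (\<lambda>x. c x - q x) l))\<^sup>2)
      \<le> Re (dft K \<nu> l * cnj (dft K (\<lambda>x. p x - c x) l))"
  shows "grad_quartic K p / 4 + fourier_norm2 K v p - (grad_quartic K c / 4 + fourier_norm2 K v c)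
      + fourier_norm2 K w (\<lambda>x. p x - c x) - fourier_norm2 K w (\<lambda>x. c x - q x)
    \<le> ginner K \<mu> (\<lambda>x. p x - c x)"
proof -
  have "fourier_norm2 K v p - fourier_norm2 K v c
      + fourier_norm2 K w (\<lambda>x. p x - c x) - fourier_norm2 K w (\<lambda>x. c x - q x)
    = (\<Sum>l\<in>freqs K. v l * ((cmod (dft K p l))\<^sup>2 - (cmod (dft K c l))\<^sup>2)
        + w l * ((cmod (dft K (\<lambda>x. p x - c x) l))\<^sup>2 - (cmod (dft K (\<lambda>x. c x - q x) l))\<^sup>2))"
    by (simp add: fourier_norm2_def sum.distrib sum_subtractf ring_distribs)
  also have "\<dots> \<le> (\<Sum>l\<in>freqs K. Re (dft K \<nu> l * cnj (dft K (\<lambda>x. p x - c x) l)))"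
    using modes by (intro sum_mono) blast
  also have "\<dots> = ginner K \<nu> (\<lambda>x. p x - c x)"
    by (metis Re_complex_of_real Re_sum parseval)
  finally have "fourier_norm2 K v p - fourier_norm2 K v c
      + fourier_norm2 K w (\<lambda>x. p x - c x) - fourier_norm2 K w (\<lambda>x. c x - q x)
    \<le> ginner K \<nu> (\<lambda>x. p x - c x)" .
  moreover have "ginner K \<mu> (\<lambda>x. p x - c x)
      = - ginner K (nlterm K p) (\<lambda>x. p x - c x) + ginner K \<nu> (\<lambda>x. p x - c x)"
  proof -
    have "\<mu> = (\<lambda>x. \<nu> x - nlterm K p x)"
      using mu by auto
    then show ?thesis
      unfolding ginner_def by (simp add: left_diff_distrib gsum_diff)
  qed
  ultimately show ?thesis
    using ginner_nlterm_le[of K p c] by argo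
qed

lemma ginner_mu1_lower:
  assumes "0 \<le> a" "0 \<le> A" "0 < dt"
  shows "energy K a p - energy K a c + (vlpnorm K 2 (grad K (\<lambda>x. p x - c x)))\<^sup>2
      - (vlpnorm K 2 (grad K (\<lambda>x. c x - q x)))\<^sup>2
    \<le> ginner K (mu1 K a A dt p c q) (\<lambda>x. p x - c x)"
proof -
  define \<nu> where "\<nu> = (\<lambda>x. a * p x + 2 * Lap K (\<lambda>y. 2 * c y - q y) x
      - A * dt * Lap K (\<lambda>y. p y - c y) x + Lap K (Lap K p) x)"
  have mu: "mu1 K a A dt p c q x = - nlterm K p x + \<nu> x" for x
    by (simp add: mu1_def \<nu>_def)
  have modes: "(a / 2 - lap_eig l + (lap_eig l)\<^sup>2 / 2)
        * ((cmod (dft K p l))\<^sup>2 - (cmod (dft K c l))\<^sup>2)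
      + lap_eig l * ((cmod (dft K (\<lambda>x. p x - c x) l))\<^sup>2 - (cmod (dft K (\<lambda>x. c x - q x) l))\<^sup>2)
    \<le> Re (dft K \<nu> l * cnj (dft K (\<lambda>x. p x - c x) l))" if l: "l \<in> freqs K" for l
  proof -
    have "dft K \<nu> l = of_real a * dft K p l - of_real (2 * lap_eig l) * (2 * dft K c l - dft K q l)
        + of_real (A * dt * lap_eig l) * (dft K p l - dft K c l) + of_real ((lap_eig l)\<^sup>2) * dft K p l"
      unfolding \<nu>_def
      by (simp only: dft_add dft_diff dft_cmult dft_Lap[OF l]) (simp add: algebra_simps power2_eq_square)
    then show ?thesis
      using mu1_mode_bound[OF lap_eig_gap[of l], where B = "A * dt" and X = "dft K p l"
        and Y = "dft K c l" and Z = "dft K q l"] assms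
      by (simp add: dft_diff)
  qed
  from ginner_test_lower[OF mu modes] show ?thesis
    by (simp add: energy_fourier grad_sq_fourier)
qed

lemma ginner_mu2_lower:
  assumes "0 \<le> \<epsilon>" "\<epsilon> < 1" "0 \<le> A" "0 < dt"
  shows "energy K (1 - \<epsilon>) p - energy K (1 - \<epsilon>) c + \<epsilon> / 2 * (lpnorm K 2 (\<lambda>x. p x - c x))\<^sup>2
      - \<epsilon> / 2 * (lpnorm K 2 (\<lambda>x. c x - q x))\<^sup>2
    \<le> ginner K (mu2 K \<epsilon> A dt p c q) (\<lambda>x. p x - c x)"
proof -
  define \<nu> where "\<nu> = (\<lambda>x. - \<epsilon> * (2 * c x - q x) - A * dt * Lap K (\<lambda>y. p y - c y) x
      + IdLap K (IdLap K p) x)"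
  have mu: "mu2 K \<epsilon> A dt p c q x = - nlterm K p x + \<nu> x" for x
    by (simp add: mu2_def \<nu>_def)
  have modes: "((1 - \<epsilon>) / 2 - lap_eig l + (lap_eig l)\<^sup>2 / 2)
        * ((cmod (dft K p l))\<^sup>2 - (cmod (dft K c l))\<^sup>2)
      + \<epsilon> / 2 * ((cmod (dft K (\<lambda>x. p x - c x) l))\<^sup>2 - (cmod (dft K (\<lambda>x. c x - q x) l))\<^sup>2)
    \<le> Re (dft K \<nu> l * cnj (dft K (\<lambda>x. p x - c x) l))" if l: "l \<in> freqs K" for l
  proof -
    have "dft K \<nu> l = - of_real \<epsilon> * (2 * dft K c l - dft K q l)
        + of_real (A * dt * lap_eig l) * (dft K p l - dft K c l) + of_real ((1 - lap_eig l)\<^sup>2) * dft K p l"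
      unfolding \<nu>_def
      by (simp only: dft_add dft_diff dft_uminus dft_cmult dft_Lap[OF l] dft_IdLap[OF l])
        (simp add: algebra_simps power2_eq_square)
    then show ?thesis
      using mu2_mode_bound[OF lap_eig_gap[of l], where B = "A * dt" and e = \<epsilon> and X = "dft K p l"
        and Y = "dft K c l" and Z = "dft K q l"] assms
      by (simp add: dft_diff)
  qed
  from ginner_test_lower[OF mu modes] show ?thesis
    by (simp add: energy_fourier L2_sq_fourier fourier_norm2_const[of K "\<epsilon> / 2"])
qed

section \<open>Decay of the modified energy\<close>

definition bdf2_step :: "nat \<Rightarrow> real \<Rightarrow> real \<Rightarrow> nat \<Rightarrow> real \<Rightarrow> grid \<Rightarrow> grid \<Rightarrow> grid \<Rightarrow> bool" where
  "bdf2_step i \<epsilon> A K dt p c q \<longleftrightarrow> (\<forall>x. (3/2 * p x - 2 * c x + 1/2 * q x) / dt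
    = Lap K (if i = 1 then mu1 K (1 - \<epsilon>) A dt p c q else mu2 K \<epsilon> A dt p c q) x)"

definition stab_term :: "nat \<Rightarrow> real \<Rightarrow> nat \<Rightarrow> grid \<Rightarrow> real" where
  "stab_term i \<epsilon> K f = (if i = 1 then (vlpnorm K 2 (grad K f))\<^sup>2 else \<epsilon> / 2 * (lpnorm K 2 f)\<^sup>2)"

definition mod_energy :: "nat \<Rightarrow> real \<Rightarrow> nat \<Rightarrow> real \<Rightarrow> grid \<Rightarrow> grid \<Rightarrow> real" where
  "mod_energy i \<epsilon> K dt p c = energy K (1 - \<epsilon>) p + hminus_norm2 K (\<lambda>x. p x - c x) / (4 * dt)
    + stab_term i \<epsilon> K (\<lambda>x. p x - c x)"

lemma mod_energy_step:
  assumes "0 \<le> \<epsilon>" "\<epsilon> < 1" "0 \<le> A" and dt: "0 < dt"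
    and step: "bdf2_step i \<epsilon> A K dt p c q"
    and mean: "dft K (\<lambda>x. c x - q x) 0 = 0"
  shows "dft K (\<lambda>x. p x - c x) 0 = 0 \<and> mod_energy i \<epsilon> K dt p c \<le> mod_energy i \<epsilon> K dt c q"
proof -
  let ?\<mu> = "if i = 1 then mu1 K (1 - \<epsilon>) A dt p c q else mu2 K \<epsilon> A dt p c q"
  have "energy K (1 - \<epsilon>) p - energy K (1 - \<epsilon>) c
      + stab_term i \<epsilon> K (\<lambda>x. p x - c x) - stab_term i \<epsilon> K (\<lambda>x. c x - q x)
    \<le> ginner K ?\<mu> (\<lambda>x. p x - c x)"
    using ginner_mu1_lower[of "1 - \<epsilon>" A dt K p c q] ginner_mu2_lower[of \<epsilon> A dt K p c q] assms
    by (simp add: stab_term_def)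
  moreover note bdf2_test_bound[OF dt step[unfolded bdf2_step_def] mean]
  moreover have "0 \<le> hminus_norm2 K (\<lambda>x. p x - c x) / (4 * dt)"
    using dt by (simp add: hminus_norm2_nonneg)
  moreover have "- (5/4 * hminus_norm2 K (\<lambda>x. p x - c x) - 1/4 * hminus_norm2 K (\<lambda>x. c x - q x)) / dt
      = - 5 * (hminus_norm2 K (\<lambda>x. p x - c x) / (4 * dt)) + hminus_norm2 K (\<lambda>x. c x - q x) / (4 * dt)"
    using dt by (simp add: field_simps)
  ultimately show ?thesis
    unfolding mod_energy_def by argo
qed

lemma energy_le_mod_energy:
  assumes "0 < dt" "0 \<le> \<epsilon>"
  shows "energy K (1 - \<epsilon>) p \<le> mod_energy i \<epsilon> K dt p c"
proof -
  have "0 \<le> hminus_norm2 K (\<lambda>x. p x - c x) / (4 * dt)"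
    using assms by (simp add: hminus_norm2_nonneg)
  moreover have "0 \<le> stab_term i \<epsilon> K (\<lambda>x. p x - c x)"
    using assms by (simp add: stab_term_def)
  ultimately show ?thesis
    unfolding mod_energy_def by linarith
qed

lemma energy_symbol_coercive:
  fixes a L :: real
  assumes "0 < a" "a < 1" and L: "L = 0 \<or> 4 \<le> L"
  shows "a / 8 * (1 + L + L\<^sup>2) \<le> a / 2 - L + L\<^sup>2 / 2"
proof (cases "L = 0")
  case False
  with L have "4 \<le> L"
    by simp
  with assms(1,2) have "a * L \<le> L" "a * L\<^sup>2 \<le> L\<^sup>2" "4 * L \<le> L\<^sup>2"
    using mult_right_mono[of 4 L L] by (simp_all add: mult_le_cancel_right1 power2_eq_square)
  moreover have "a / 8 * (1 + L + L\<^sup>2) = a / 8 + a * L / 8 + a * L\<^sup>2 / 8"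
    by (simp add: algebra_simps)
  ultimately show ?thesis
    using \<open>0 < a\<close> \<open>4 \<le> L\<close> by linarith
qed (use assms in simp)

lemma H2norm_sq_le_energy:
  assumes "0 < a" "a < 1"
  shows "a / 8 * (H2norm K f)\<^sup>2 \<le> energy K a f"
proof -
  have "a / 8 * (H2norm K f)\<^sup>2 = fourier_norm2 K (\<lambda>l. a / 8 * (1 + lap_eig l + (lap_eig l)\<^sup>2)) f"
    by (simp only: H2norm_sq_fourier fourier_norm2_cmult)
  also have "\<dots> \<le> fourier_norm2 K (\<lambda>l. a / 2 - lap_eig l + (lap_eig l)\<^sup>2 / 2) f"
    by (intro fourier_norm2_mono energy_symbol_coercive[OF assms lap_eig_gap])
  also have "\<dots> \<le> energy K a f"
    by (simp add: energy_fourier grad_quartic_nonneg)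
  finally show ?thesis .
qed

lemma mod_energy_initial:
  assumes "0 < dt"
  shows "mod_energy i \<epsilon> K dt p (\<lambda>x. p x - dt * Lap K M x)
    = energy K (1 - \<epsilon>) p + dt / 4 * (vlpnorm K 2 (grad K M))\<^sup>2
      + (if i = 1 then dt\<^sup>2 * (vlpnorm K 2 (grad K (Lap K M)))\<^sup>2
         else \<epsilon> * dt\<^sup>2 / 2 * (lpnorm K 2 (Lap K M))\<^sup>2)"
proof -
  have "(\<lambda>l. 1 / lap_eig l * (lap_eig l)\<^sup>2) = lap_eig"
    by (auto simp: power2_eq_square)
  then have "hminus_norm2 K (\<lambda>x. dt * Lap K M x) = dt\<^sup>2 * (vlpnorm K 2 (grad K M))\<^sup>2"
    by (simp add: hminus_norm2_def fourier_norm2_scale fourier_norm2_Lap grad_sq_fourier)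
  then have "hminus_norm2 K (\<lambda>x. dt * Lap K M x) / (4 * dt) = dt / 4 * (vlpnorm K 2 (grad K M))\<^sup>2"
    using assms by (simp add: power2_eq_square)
  moreover have "stab_term i \<epsilon> K (\<lambda>x. dt * Lap K M x) = (if i = 1 then dt\<^sup>2 * (vlpnorm K 2 (grad K (Lap K M)))\<^sup>2
      else \<epsilon> * dt\<^sup>2 / 2 * (lpnorm K 2 (Lap K M))\<^sup>2)"
    by (simp add: stab_term_def grad_sq_fourier L2_sq_fourier fourier_norm2_scale)
  ultimately show ?thesis
    by (simp add: mod_energy_def)
qed

lemma mod_energy_nonincreasing:
  fixes \<phi> :: "int \<Rightarrow> grid"
  assumes "0 < \<epsilon>" "\<epsilon> < 1" "0 \<le> A" "0 < dt"
    and init: "\<phi> (-1) = (\<lambda>x. \<phi> 0 x - dt * Lap K (mu0 K (1 - \<epsilon>) (\<phi> 0)) x)"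
    and scheme: "\<forall>k\<ge>0. bdf2_step i \<epsilon> A K dt (\<phi> (k + 1)) (\<phi> k) (\<phi> (k - 1))"
  shows "mod_energy i \<epsilon> K dt (\<phi> (int n)) (\<phi> (int n - 1)) \<le> mod_energy i \<epsilon> K dt (\<phi> 0) (\<phi> (-1))"
proof -
  have "dft K (\<lambda>x. \<phi> (int n) x - \<phi> (int n - 1) x) 0 = 0
    \<and> mod_energy i \<epsilon> K dt (\<phi> (int n)) (\<phi> (int n - 1)) \<le> mod_energy i \<epsilon> K dt (\<phi> 0) (\<phi> (-1))"
  proof (induction n)
    case 0
    show ?case
      by (simp add: init dft_cmult dft_Lap lap_eig_eq_0_iff)
  next
    case (Suc n)
    have "bdf2_step i \<epsilon> A K dt (\<phi> (int n + 1)) (\<phi> (int n)) (\<phi> (int n - 1))"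
      using scheme by simp
    from mod_energy_step[OF _ assms(2-4) this] assms(1) Suc.IH show ?case
      by (auto simp: add.commute intro: order_trans)
  qed
  then show ?thesis ..
qed

lemma bdf2_H2_bound:
  fixes \<phi> :: "int \<Rightarrow> grid" and m :: int
  assumes "0 < \<epsilon>" "\<epsilon> < 1" "0 \<le> A" "0 < dt"
    and init: "\<phi> (-1) = (\<lambda>x. \<phi> 0 x - dt * Lap K (mu0 K (1 - \<epsilon>) (\<phi> 0)) x)"
    and scheme: "\<forall>k\<ge>0. bdf2_step i \<epsilon> A K dt (\<phi> (k + 1)) (\<phi> k) (\<phi> (k - 1))"
    and bound: "mod_energy i \<epsilon> K dt (\<phi> 0) (\<phi> (-1)) \<le> C0"
    and "0 \<le> m"
  shows "H2norm K (\<phi> m) \<le> sqrt (8 * \<bar>C0\<bar> / (1 - \<epsilon>))"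
proof -
  obtain n where m: "m = int n"
    using \<open>0 \<le> m\<close> nonneg_int_cases by blast
  have "(1 - \<epsilon>) / 8 * (H2norm K (\<phi> m))\<^sup>2 \<le> energy K (1 - \<epsilon>) (\<phi> m)"
    using assms(1,2) by (intro H2norm_sq_le_energy) auto
  also have "\<dots> \<le> mod_energy i \<epsilon> K dt (\<phi> m) (\<phi> (m - 1))"
    using assms(1,4) by (intro energy_le_mod_energy) auto
  also have "\<dots> \<le> C0"
    using mod_energy_nonincreasing[OF assms(1-6)] bound unfolding m by (rule order_trans)
  finally have "(H2norm K (\<phi> m))\<^sup>2 \<le> 8 * \<bar>C0\<bar> / (1 - \<epsilon>)"
    using assms(2) by (simp add: field_simps)
  then show ?thesis
    by (rule real_le_rsqrt)
qed

theorem corollary3p1: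
  fixes \<epsilon> A :: real and i :: nat
  assumes "0 < \<epsilon>" and "\<epsilon> < 1"
    and "A \<ge> \<epsilon>\<^sup>2 / 16"
    and "i = 1 \<or> i = 2"
  shows "\<forall>C0::real. \<exists>C1>0. \<forall>(K::nat) (dt::real) (\<phi>::int \<Rightarrow> grid).
    (dt > 0
     \<and> (\<forall>m\<ge>0. gridfun K (\<phi> m))
     \<and> \<phi> (-1) = (\<lambda>x. \<phi> 0 x - dt * Lap K (mu0 K (1 - \<epsilon>) (\<phi> 0)) x)
     \<and> (\<forall>k\<ge>0. \<forall>x. (3/2 * \<phi> (k+1) x - 2 * \<phi> k x + 1/2 * \<phi> (k-1) x) / dt
            = Lap K (if i = 1 then mu1 K (1 - \<epsilon>) A dt (\<phi> (k+1)) (\<phi> k) (\<phi> (k-1))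
                               else mu2 K \<epsilon> A dt (\<phi> (k+1)) (\<phi> k) (\<phi> (k-1))) x)
     \<and> (if i = 1 then
          energy K (1 - \<epsilon>) (\<phi> 0) + dt / 4 * (vlpnorm K 2 (grad K (mu0 K (1 - \<epsilon>) (\<phi> 0))))\<^sup>2
            + dt\<^sup>2 * (vlpnorm K 2 (grad K (Lap K (mu0 K (1 - \<epsilon>) (\<phi> 0)))))\<^sup>2 \<le> C0
        else
          energy K (1 - \<epsilon>) (\<phi> 0) + dt / 4 * (vlpnorm K 2 (grad K (mu0 K (1 - \<epsilon>) (\<phi> 0))))\<^sup>2
            + \<epsilon> * dt\<^sup>2 / 2 * (lpnorm K 2 (Lap K (mu0 K (1 - \<epsilon>) (\<phi> 0))))\<^sup>2 \<le> C0))
    \<longrightarrow> (\<forall>m\<ge>1. H2norm K (\<phi> m) \<le> C1)"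
proof -
  have "0 \<le> A"
    by (rule order_trans[OF _ assms(3)]) simp
  note H2_bound = bdf2_H2_bound[OF assms(1,2) this]
  have C1_pos: "0 < sqrt (8 * \<bar>C0\<bar> / (1 - \<epsilon>)) + 1" for C0
    using assms(2) by (intro add_nonneg_pos real_sqrt_ge_zero) simp_all
  show ?thesis
    apply (intro allI)
    subgoal for C0
      apply (intro exI[of _ "sqrt (8 * \<bar>C0\<bar> / (1 - \<epsilon>)) + 1"] conjI allI impI C1_pos)
      apply (elim conjE)
      subgoal for K dt \<phi> m
        using H2_bound[of dt \<phi> K i C0 m] mod_energy_initial[of dt i \<epsilon> K "\<phi> 0" "mu0 K (1 - \<epsilon>) (\<phi> 0)"]
        by (auto simp: bdf2_step_def split: if_splits)
      done
    done
qed

end
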